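(* Let $(S,\mu^{(5)})$ be a commutative $5$-ary semigroup. Define on $S\times S$ the ternary operation $\boldsymbol\mu'^{(3)}\big[(a_1,b_1),(a_2,b_2),(a_3,b_3)\big]=\big(\mu^{(5)}[a_1,b_2,a_3,b_1,a_2],\ b_3\big)$. Then $\boldsymbol\mu'^{(3)}$ is totally associative, so $(S\times S,\boldsymbol\mu'^{(3)})$ is a ternary semigroup. If $e\in S$ satisfies $\mu^{(5)}[e,e,e,e,a]=a$ for all $a\in S$, then $E=(e,e)$ satisfies $\boldsymbol\mu'^{(3)}[E,E,\mathbf S]=\mathbf S$ for all $\mathbf S\in S\times S$.
   Context: A $5$-ary semigroup is a set $S$ with a totally associative map $\mu^{(5)}:S^{\times5}\to S$ (composition of two multiplications on an ordered $9$-tuple is independent of the position of the inner one); commutative means invariant under all permutations of the five arguments. A ternary operation is totally associative if $\mu[\mu[g_1,g_2,g_3],g_4,g_5]=\mu[g_1,\mu[g_2,g_3,g_4],g_5]=\mu[g_1,g_2,\mu[g_3,g_4,g_5]]$. *)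

theory Defs
  imports Main "HOL-Combinatorics.Permutations"
begin

type_synonym 'a op5 = "'a \<Rightarrow> 'a \<Rightarrow> 'a \<Rightarrow> 'a \<Rightarrow> 'a \<Rightarrow> 'a"
type_synonym 'a op3 = "'a \<Rightarrow> 'a \<Rightarrow> 'a \<Rightarrow> 'a"

definition tot_assoc5 :: "'a op5 \<Rightarrow> bool" where
  "tot_assoc5 m \<longleftrightarrow> (\<forall>x1 x2 x3 x4 x5 x6 x7 x8 x9.
      m (m x1 x2 x3 x4 x5) x6 x7 x8 x9 = m x1 (m x2 x3 x4 x5 x6) x7 x8 x9
    \<and> m x1 (m x2 x3 x4 x5 x6) x7 x8 x9 = m x1 x2 (m x3 x4 x5 x6 x7) x8 x9
    \<and> m x1 x2 (m x3 x4 x5 x6 x7) x8 x9 = m x1 x2 x3 (m x4 x5 x6 x7 x8) x9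
    \<and> m x1 x2 x3 (m x4 x5 x6 x7 x8) x9 = m x1 x2 x3 x4 (m x5 x6 x7 x8 x9))"

definition comm5 :: "'a op5 \<Rightarrow> bool" where
  "comm5 m \<longleftrightarrow> (\<forall>(f :: nat \<Rightarrow> 'a) \<sigma>. \<sigma> permutes {0..<5} \<longrightarrow>
      m (f (\<sigma> 0)) (f (\<sigma> 1)) (f (\<sigma> 2)) (f (\<sigma> 3)) (f (\<sigma> 4)) = m (f 0) (f 1) (f 2) (f 3) (f 4))"

definition semigroup5 :: "'a op5 \<Rightarrow> bool" where
  "semigroup5 m \<longleftrightarrow> tot_assoc5 m"

definition comm_semigroup5 :: "'a op5 \<Rightarrow> bool" where
  "comm_semigroup5 m \<longleftrightarrow> semigroup5 m \<and> comm5 m"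

definition tot_assoc3 :: "'a op3 \<Rightarrow> bool" where
  "tot_assoc3 m \<longleftrightarrow> (\<forall>g1 g2 g3 g4 g5.
      m (m g1 g2 g3) g4 g5 = m g1 (m g2 g3 g4) g5
    \<and> m g1 (m g2 g3 g4) g5 = m g1 g2 (m g3 g4 g5))"

definition mu3' :: "'a op5 \<Rightarrow> ('a \<times> 'a) op3" where
  "mu3' m p1 p2 p3 = (m (fst p1) (snd p2) (fst p3) (snd p1) (fst p2), snd p3)"

end

theory Submission
  imports Defs
begin

text \<open>Total associativity lets every composite of two multiplications be written as
  \<open>m (m x1 x2 x3 x4 x5) x6 x7 x8 x9\<close>. Commutativity permutes \<open>x1 \<dots> x5\<close> and \<open>x6 \<dots> x9\<close>
  separately, and moving the inner product to the last slot shows that \<open>x5\<close> and \<open>x6\<close>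
  may be exchanged as well; so this composite is symmetric in all nine arguments.
  Both associativity laws of \<open>mu3' m\<close> are then equalities between two rearrangements
  of the same nine entries, and the unit law reduces to \<open>m e e a e e = m e e e e a\<close>.\<close>

lemma comm5_transpose:
  fixes f :: "nat \<Rightarrow> 'a"
  assumes "comm5 m" and "i < 5" and "j < 5"
  shows "m (f (transpose i j 0)) (f (transpose i j 1)) (f (transpose i j 2))
           (f (transpose i j 3)) (f (transpose i j 4)) = m (f 0) (f 1) (f 2) (f 3) (f 4)"
proof -
  have "transpose i j permutes {0..<5}"
    using assms by (intro permutes_swap_id) auto
  then show ?thesis
    using \<open>comm5 m\<close> unfolding comm5_def by blast
qed

lemma comm5_swap01: "comm5 m \<Longrightarrow> m x2 x1 x3 x4 x5 = m x1 x2 x3 x4 x5"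
  using comm5_transpose[of m 0 1 "(!) [x1, x2, x3, x4, x5]"] by (simp add: transpose_def)

lemma comm5_swap12: "comm5 m \<Longrightarrow> m x1 x3 x2 x4 x5 = m x1 x2 x3 x4 x5"
  using comm5_transpose[of m 1 2 "(!) [x1, x2, x3, x4, x5]"] by (simp add: transpose_def)

lemma comm5_swap23: "comm5 m \<Longrightarrow> m x1 x2 x4 x3 x5 = m x1 x2 x3 x4 x5"
  using comm5_transpose[of m 2 3 "(!) [x1, x2, x3, x4, x5]"] by (simp add: transpose_def)

lemma comm5_swap34: "comm5 m \<Longrightarrow> m x1 x2 x3 x5 x4 = m x1 x2 x3 x4 x5"
  using comm5_transpose[of m 3 4 "(!) [x1, x2, x3, x4, x5]"] by (simp add: transpose_def)

lemmas comm5_adjacent_swaps = comm5_swap01 comm5_swap12 comm5_swap23 comm5_swap34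

lemma tot_assoc5_inner_last:
  "tot_assoc5 m \<Longrightarrow> m x1 x2 x3 x4 (m x5 x6 x7 x8 x9) = m (m x1 x2 x3 x4 x5) x6 x7 x8 x9"
  unfolding tot_assoc5_def by metis

lemma tot_assoc5_inner_middle:
  "tot_assoc5 m \<Longrightarrow> m x1 x2 (m x3 x4 x5 x6 x7) x8 x9 = m (m x1 x2 x3 x4 x5) x6 x7 x8 x9"
  unfolding tot_assoc5_def by metis

lemma comm_assoc5_exchange:
  assumes "comm5 m" and "tot_assoc5 m"
  shows "m (m x1 x2 x3 x4 x6) x5 x7 x8 x9 = m (m x1 x2 x3 x4 x5) x6 x7 x8 x9"
proof -
  have "m (m x1 x2 x3 x4 x6) x5 x7 x8 x9 = m x1 x2 x3 x4 (m x6 x5 x7 x8 x9)"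
    using tot_assoc5_inner_last[OF \<open>tot_assoc5 m\<close>] by simp
  also have "\<dots> = m x1 x2 x3 x4 (m x5 x6 x7 x8 x9)"
    using comm5_swap01[OF \<open>comm5 m\<close>] by simp
  also have "\<dots> = m (m x1 x2 x3 x4 x5) x6 x7 x8 x9"
    using tot_assoc5_inner_last[OF \<open>tot_assoc5 m\<close>] by simp
  finally show ?thesis .
qed

lemma mu3'_assoc_left:
  assumes "comm5 m" and "tot_assoc5 m"
  shows "mu3' m (mu3' m g1 g2 g3) g4 g5 = mu3' m g1 (mu3' m g2 g3 g4) g5"
proof -
  note swaps = comm5_adjacent_swaps[OF \<open>comm5 m\<close>]
  note exchange = comm_assoc5_exchange[OF assms]
  have "m (m a1 b2 a3 b1 a2) b4 a5 b3 a4 = m (m a1 b4 a5 b1 a2) b3 a4 b2 a3"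
    for a1 a2 a3 a4 a5 b1 b2 b3 b4
  proof -
    have "m (m a1 b2 a3 b1 a2) b4 a5 b3 a4 = m (m a1 b1 a2 b2 a3) b4 a5 b3 a4"
      by (simp only: swaps)
    also have "\<dots> = m (m a1 b1 a2 b2 b4) a3 a5 b3 a4" by (rule exchange[symmetric])
    also have "\<dots> = m (m a1 b1 a2 b4 b2) a5 a3 b3 a4" by (simp only: swaps)
    also have "\<dots> = m (m a1 b1 a2 b4 a5) b2 a3 b3 a4" by (rule exchange[symmetric])
    also have "\<dots> = m (m a1 b4 a5 b1 a2) b3 a4 b2 a3" by (simp only: swaps)
    finally show ?thesis .
  qed
  then show ?thesis
    unfolding mu3'_def prod.sel tot_assoc5_inner_last[OF \<open>tot_assoc5 m\<close>] by simp
qed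

lemma mu3'_assoc_right:
  assumes "comm5 m" and "tot_assoc5 m"
  shows "mu3' m g1 (mu3' m g2 g3 g4) g5 = mu3' m g1 g2 (mu3' m g3 g4 g5)"
proof -
  note swaps = comm5_adjacent_swaps[OF \<open>comm5 m\<close>]
  note exchange = comm_assoc5_exchange[OF assms]
  have "m (m a1 b4 a5 b1 a2) b3 a4 b2 a3 = m (m a1 b2 a3 b4 a5) b3 a4 b1 a2"
    for a1 a2 a3 a4 a5 b1 b2 b3 b4
  proof -
    have "m (m a1 b4 a5 b1 a2) b3 a4 b2 a3 = m (m a1 b4 a5 a2 b1) b2 a3 b3 a4"
      by (simp only: swaps)
    also have "\<dots> = m (m a1 b4 a5 a2 b2) b1 a3 b3 a4" by (rule exchange[symmetric])
    also have "\<dots> = m (m a1 b4 a5 b2 a2) a3 b1 b3 a4" by (simp only: swaps)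
    also have "\<dots> = m (m a1 b4 a5 b2 a3) a2 b1 b3 a4" by (rule exchange[symmetric])
    also have "\<dots> = m (m a1 b2 a3 b4 a5) b3 a4 b1 a2" by (simp only: swaps)
    finally show ?thesis .
  qed
  then show ?thesis
    unfolding mu3'_def prod.sel tot_assoc5_inner_last[OF \<open>tot_assoc5 m\<close>]
      tot_assoc5_inner_middle[OF \<open>tot_assoc5 m\<close>] by simp
qed

lemma tot_assoc3_mu3':
  assumes "comm5 m" and "tot_assoc5 m"
  shows "tot_assoc3 (mu3' m)"
  unfolding tot_assoc3_def using mu3'_assoc_left[OF assms] mu3'_assoc_right[OF assms] by blast

lemma mu3'_neutral_pair_left:
  assumes "comm5 m" and "\<And>a. m e e e e a = a"
  shows "mu3' m (e, e) (e, e) s = s"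
proof -
  have "m e e (fst s) e e = m e e e e (fst s)"
    using comm5_swap23[OF \<open>comm5 m\<close>] comm5_swap34[OF \<open>comm5 m\<close>] by metis
  then show ?thesis
    using assms(2) by (simp add: mu3'_def)
qed

theorem mainTheorem6:
  fixes m :: "'a op5"
  assumes "comm_semigroup5 m"
  shows "tot_assoc3 (mu3' m)
    \<and> (\<forall>e. (\<forall>a. m e e e e a = a) \<longrightarrow> (\<forall>s. mu3' m (e, e) (e, e) s = s))"
proof -
  have comm: "comm5 m" and assoc: "tot_assoc5 m"
    using assms by (auto simp: comm_semigroup5_def semigroup5_def)
  show ?thesis
    using tot_assoc3_mu3'[OF comm assoc] mu3'_neutral_pair_left[OF comm] by blast
qed

end
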